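(* Let $\mathcal{F}$ be the star-shaped frame described below, let $d_i$ be a domain, and let $p$ be a $d_i$-purge function. Then $\mathcal{F}\in\mathrm{ND}^p$ iff $\mathcal{F}$ $f^p$-limits $\mathsf{IN}$-to-$C_i$ flow, i.e. iff $f^p$ is a blur operator and for every $\mathcal{B}\in\mathrm{lruns}_{C_i}$ the set $J_{C_i}^{\mathsf{IN}}(\mathcal{B})$ satisfies $f^p(J_{C_i}^{\mathsf{IN}}(\mathcal{B}))=J_{C_i}^{\mathsf{IN}}(\mathcal{B})$.
   Context: Frames and executions: a frame has locations, channels (each with a sender and recipient location) and data values; each location $\ell$ has a prefix-closed set $\mathrm{traces}(\ell)$ of finite or infinite sequences of labels (channel, data) over channels incident to $\ell$. Events come from a set $E$ with functions $\mathrm{chan}$, $\mathrm{msg}$; a system of events $(B,\preceq)$ ($B\subseteq E$, $\preceq$ a partial order with finitely many predecessors per event) is an execution ($\in\mathrm{exec}(\mathcal{F})$) iff for each location the events on its incident channels are linearly ordered and, as a label sequence, belong to its trace set. $\mathcal{A}|_C$ keeps the events whose channel is in $C$, with the restricted order; $\mathrm{lruns}_C=\{\mathcal{A}|_C:\mathcal{A}\in\mathrm{exec}(\mathcal{F})\}$; $J_C^{C'}(\mathcal{B})=\{\mathcal{A}|_{C'}:\mathcal{A}\in\mathrm{exec}(\mathcal{F}),\ \mathcal{A}|_C=\mathcal{B}\}$. Setting: a finite set of domains $\{d_1,\dots,d_k\}$ with a reflexive relation $\hookrightarrow$; $\mathcal{F}$ has locations $d_1,\dots,d_k,M$ and channels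 $c_j^{\mathrm{in}}$ (sender $d_j$, recipient $M$) and $c_j^{\mathrm{out}}$ (sender $M$, recipient $d_j$), with given trace sets (e.g. induced by a possibly nondeterministic state machine at $M$). $C_i=\{c_i^{\mathrm{in}},c_i^{\mathrm{out}}\}$, $\mathrm{vis}(d_i)=\{c_j^{\mathrm{in}}:d_j\hookrightarrow d_i\}$, $\mathsf{IN}=\{c_j^{\mathrm{in}}:1\le j\le k\}$, $\mathrm{inp}(\mathcal{A})=\mathcal{A}|_{\mathsf{IN}}$. A $d_i$-purge function is a function $p$ from $\mathrm{exec}(\mathcal{F})$ to some set such that (1) $\mathrm{inp}(\mathcal{A})=\mathrm{inp}(\mathcal{A}')$ implies $p(\mathcal{A})=p(\mathcal{A}')$, and (2) $p(\mathcal{A})=p(\mathcal{A}')$ implies $\mathcal{A}|_{\mathrm{vis}(d_i)}=\mathcal{A}'|_{\mathrm{vis}(d_i)}$. $\mathcal{F}\in\mathrm{ND}^p$ iff for all $\mathcal{A},\mathcal{A}'\in\mathrm{exec}(\mathcal{F})$, $p(\mathcal{A})=p(\mathcal{A}')$ implies $\mathcal{A}'|_{\mathsf{IN}}\in J_{C_i}^{\mathsf{IN}}(\mathcal{A}|_{C_i})$. Define the relation $\mathcal{R}$ on $\mathrm{lruns}_{\mathsf{IN}}$ by $\mathcal{R}(\mathcal{B}_1,\mathcal{B}_2)$ iff there exist $\mathcal{A}_1,\mathcal{A}_2\in\mathrm{exec}(\mathcal{F})$ with $\mathcal{B}_j=\mathcal{A}_j|_{\mathsf{IN}}$ ($j=1,2$)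 and $p(\mathcal{A}_1)=p(\mathcal{A}_2)$ (an equivalence relation on $\mathrm{lruns}_{\mathsf{IN}}$), and let $f^p(S)=\{\mathcal{B}_2\in\mathrm{lruns}_{\mathsf{IN}}:\exists\mathcal{B}_1\in S,\ \mathcal{R}(\mathcal{B}_1,\mathcal{B}_2)\}$ for $S\subseteq\mathrm{lruns}_{\mathsf{IN}}$ (closure under $\mathcal{R}$-classes). A blur operator is a function $f$ on sets with $S\subseteq f(S)$, $f(f(S))=f(S)$ and $f(\bigcup_i S_i)=\bigcup_i f(S_i)$. *)

theory Defs
  imports Main
begin

text \<open>Locations: the domains (elements of a finite type 'dom) and the hub M.
  Channels: cin d (sender d, recipient M) and cout d (sender M, recipient d).\<close>

datatype 'dom loc = Dom 'dom | Mid
datatype 'dom chan = Cin 'dom | Cout 'dom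

fun sender :: "'dom chan \<Rightarrow> 'dom loc" where
  "sender (Cin d) = Dom d" | "sender (Cout d) = Mid"
fun recipient :: "'dom chan \<Rightarrow> 'dom loc" where
  "recipient (Cin d) = Mid" | "recipient (Cout d) = Dom d"

definition incident :: "'dom loc \<Rightarrow> 'dom chan \<Rightarrow> bool" where
  "incident l c \<longleftrightarrow> sender c = l \<or> recipient c = l"

text \<open>A (finite or infinite) sequence is a partial function on nat whose domain is
  downward closed; None marks the end of a finite sequence.\<close>
type_synonym ('c,'d) trace = "nat \<Rightarrow> ('c \<times> 'd) option"

definition is_seq :: "('c,'d) trace \<Rightarrow> bool" where
  "is_seq t \<longleftrightarrow> (\<forall>n m. m \<le> n \<longrightarrow> t n \<noteq> None \<longrightarrow> t m \<noteq> None)"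

definition is_prefix :: "('c,'d) trace \<Rightarrow> ('c,'d) trace \<Rightarrow> bool" where
  "is_prefix s t \<longleftrightarrow> is_seq s \<and> (\<forall>n. s n \<noteq> None \<longrightarrow> s n = t n)"

definition frame_wf :: "('dom loc \<Rightarrow> ('dom chan,'d) trace set) \<Rightarrow> bool" where
  "frame_wf tr \<longleftrightarrow> (\<forall>l. \<forall>t\<in>tr l.
      is_seq t \<and> (\<forall>n c v. t n = Some (c, v) \<longrightarrow> incident l c)
      \<and> (\<forall>s. is_prefix s t \<longrightarrow> s \<in> tr l))"

text \<open>Events are elements of a type 'e (the set E = UNIV) with functions chan and msg.\<close>
type_synonym 'e sys = "'e set \<times> ('e \<times> 'e) set"

definition is_system :: "'e sys \<Rightarrow> bool" where
  "is_system A \<longleftrightarrow> (snd A \<subseteq> fst A \<times> fst A \<and> refl_on (fst A) (snd A) \<and> antisym (snd A)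
      \<and> trans (snd A) \<and> (\<forall>e\<in>fst A. finite {x. (x, e) \<in> snd A}))"

definition loc_events :: "('e \<Rightarrow> 'dom chan) \<Rightarrow> 'e sys \<Rightarrow> 'dom loc \<Rightarrow> 'e set" where
  "loc_events chan A l = {e \<in> fst A. incident l (chan e)}"

definition npred :: "('e \<Rightarrow> 'dom chan) \<Rightarrow> 'e sys \<Rightarrow> 'dom loc \<Rightarrow> 'e \<Rightarrow> nat" where
  "npred chan A l e = card {x \<in> loc_events chan A l. (x, e) \<in> snd A \<and> x \<noteq> e}"

definition label_seq :: "('e \<Rightarrow> 'dom chan) \<Rightarrow> ('e \<Rightarrow> 'd) \<Rightarrow> 'e sys \<Rightarrow> 'dom loc
    \<Rightarrow> ('dom chan,'d) trace" where
  "label_seq chan msg A l n =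
    (if \<exists>e\<in>loc_events chan A l. npred chan A l e = n
     then Some (let e = (THE e. e \<in> loc_events chan A l \<and> npred chan A l e = n)
                in (chan e, msg e))
     else None)"

definition exec :: "('e \<Rightarrow> 'dom chan) \<Rightarrow> ('e \<Rightarrow> 'd) \<Rightarrow> ('dom loc \<Rightarrow> ('dom chan,'d) trace set)
    \<Rightarrow> 'e sys set" where
  "exec chan msg tr = {A. is_system A \<and>
     (\<forall>l. (\<forall>e\<in>loc_events chan A l. \<forall>e'\<in>loc_events chan A l. (e, e') \<in> snd A \<or> (e', e) \<in> snd A)
          \<and> label_seq chan msg A l \<in> tr l)}"

definition restr :: "('e \<Rightarrow> 'dom chan) \<Rightarrow> 'e sys \<Rightarrow> 'dom chan set \<Rightarrow> 'e sys" where
  "restr chan A C = (let B' = {e \<in> fst A. chan e \<in> C} in (B', snd A \<inter> (B' \<times> B')))"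

definition lruns :: "('e \<Rightarrow> 'dom chan) \<Rightarrow> ('e \<Rightarrow> 'd) \<Rightarrow> ('dom loc \<Rightarrow> ('dom chan,'d) trace set)
    \<Rightarrow> 'dom chan set \<Rightarrow> 'e sys set" where
  "lruns chan msg tr C = (\<lambda>A. restr chan A C) ` exec chan msg tr"

definition Jrel :: "('e \<Rightarrow> 'dom chan) \<Rightarrow> ('e \<Rightarrow> 'd) \<Rightarrow> ('dom loc \<Rightarrow> ('dom chan,'d) trace set)
    \<Rightarrow> 'dom chan set \<Rightarrow> 'dom chan set \<Rightarrow> 'e sys \<Rightarrow> 'e sys set" where
  "Jrel chan msg tr C C' B =
     {restr chan A C' | A. A \<in> exec chan msg tr \<and> restr chan A C = B}"

definition Ci :: "'dom \<Rightarrow> 'dom chan set" where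
  "Ci i = {Cin i, Cout i}"

definition IN :: "'dom chan set" where
  "IN = range Cin"

definition vis :: "('dom \<Rightarrow> 'dom \<Rightarrow> bool) \<Rightarrow> 'dom \<Rightarrow> 'dom chan set" where
  "vis flows i = {Cin j | j. flows j i}"

definition purge_fun :: "('e \<Rightarrow> 'dom chan) \<Rightarrow> ('e \<Rightarrow> 'd) \<Rightarrow> ('dom loc \<Rightarrow> ('dom chan,'d) trace set)
    \<Rightarrow> ('dom \<Rightarrow> 'dom \<Rightarrow> bool) \<Rightarrow> 'dom \<Rightarrow> ('e sys \<Rightarrow> 'r) \<Rightarrow> bool" where
  "purge_fun chan msg tr flows i p \<longleftrightarrow>
     (\<forall>A\<in>exec chan msg tr. \<forall>A'\<in>exec chan msg tr.
        (restr chan A IN = restr chan A' IN \<longrightarrow> p A = p A') \<and>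
        (p A = p A' \<longrightarrow> restr chan A (vis flows i) = restr chan A' (vis flows i)))"

definition ND :: "('e \<Rightarrow> 'dom chan) \<Rightarrow> ('e \<Rightarrow> 'd) \<Rightarrow> ('dom loc \<Rightarrow> ('dom chan,'d) trace set)
    \<Rightarrow> 'dom \<Rightarrow> ('e sys \<Rightarrow> 'r) \<Rightarrow> bool" where
  "ND chan msg tr i p \<longleftrightarrow>
     (\<forall>A\<in>exec chan msg tr. \<forall>A'\<in>exec chan msg tr.
        p A = p A' \<longrightarrow> restr chan A' IN \<in> Jrel chan msg tr (Ci i) IN (restr chan A (Ci i)))"

definition Rp :: "('e \<Rightarrow> 'dom chan) \<Rightarrow> ('e \<Rightarrow> 'd) \<Rightarrow> ('dom loc \<Rightarrow> ('dom chan,'d) trace set)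
    \<Rightarrow> ('e sys \<Rightarrow> 'r) \<Rightarrow> 'e sys \<Rightarrow> 'e sys \<Rightarrow> bool" where
  "Rp chan msg tr p B1 B2 \<longleftrightarrow>
     (\<exists>A1\<in>exec chan msg tr. \<exists>A2\<in>exec chan msg tr.
        B1 = restr chan A1 IN \<and> B2 = restr chan A2 IN \<and> p A1 = p A2)"

definition fp :: "('e \<Rightarrow> 'dom chan) \<Rightarrow> ('e \<Rightarrow> 'd) \<Rightarrow> ('dom loc \<Rightarrow> ('dom chan,'d) trace set)
    \<Rightarrow> ('e sys \<Rightarrow> 'r) \<Rightarrow> 'e sys set \<Rightarrow> 'e sys set" where
  "fp chan msg tr p S =
     {B2 \<in> lruns chan msg tr IN. \<exists>B1\<in>S. Rp chan msg tr p B1 B2}"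

definition blur_on :: "'a set \<Rightarrow> ('a set \<Rightarrow> 'a set) \<Rightarrow> bool" where
  "blur_on U f \<longleftrightarrow>
     (\<forall>S. S \<subseteq> U \<longrightarrow> S \<subseteq> f S \<and> f S \<subseteq> U \<and> f (f S) = f S) \<and>
     (\<forall>SS. (\<forall>S\<in>SS. S \<subseteq> U) \<longrightarrow> f (\<Union>SS) = (\<Union>S\<in>SS. f S))"

definition f_limits :: "('e \<Rightarrow> 'dom chan) \<Rightarrow> ('e \<Rightarrow> 'd) \<Rightarrow> ('dom loc \<Rightarrow> ('dom chan,'d) trace set)
    \<Rightarrow> ('e sys set \<Rightarrow> 'e sys set) \<Rightarrow> 'dom chan set \<Rightarrow> 'dom chan set \<Rightarrow> bool" where
  "f_limits chan msg tr f Csrc Cdst \<longleftrightarrow>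
     blur_on (lruns chan msg tr Csrc) f \<and>
     (\<forall>B\<in>lruns chan msg tr Cdst.
        f (Jrel chan msg tr Cdst Csrc B) = Jrel chan msg tr Cdst Csrc B)"

end

theory Submission
  imports Defs
begin

text \<open>Only clause (1) of a purge function is needed: equal input runs give equal
  purges. This makes \<open>Rp\<close> transitive, so \<open>fp\<close> saturates sets by the equivalence
  classes of \<open>Rp\<close> and is a blur operator. Noninterference says exactly that
  \<open>p A = p A'\<close> keeps the inputs of \<open>A'\<close> inside the \<open>J\<close>-set of \<open>A|_C_i\<close>, i.e. that
  every \<open>J\<close>-set is closed under \<open>Rp\<close>, which is what \<open>fp\<close>-limiting flow demands.\<close>

definition determined_by_inputs ::
    "('e \<Rightarrow> 'dom chan) \<Rightarrow> ('e \<Rightarrow> 'd) \<Rightarrow> ('dom loc \<Rightarrow> ('dom chan,'d) trace set)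
      \<Rightarrow> ('e sys \<Rightarrow> 'r) \<Rightarrow> bool" where
  "determined_by_inputs chan msg tr p \<longleftrightarrow>
     (\<forall>A\<in>exec chan msg tr. \<forall>A'\<in>exec chan msg tr.
        restr chan A IN = restr chan A' IN \<longrightarrow> p A = p A')"

lemma purge_fun_imp_determined_by_inputs:
  "purge_fun chan msg tr flows i p \<Longrightarrow> determined_by_inputs chan msg tr p"
  unfolding purge_fun_def determined_by_inputs_def by blast

lemma Rp_refl:
  "B \<in> lruns chan msg tr IN \<Longrightarrow> Rp chan msg tr p B B"
  unfolding lruns_def Rp_def by blast

lemma Rp_trans:
  assumes det: "determined_by_inputs chan msg tr p"
    and "Rp chan msg tr p B1 B2" "Rp chan msg tr p B2 B3"
  shows "Rp chan msg tr p B1 B3"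
proof -
  from assms(2) obtain A1 A2 where A1: "A1 \<in> exec chan msg tr" "B1 = restr chan A1 IN"
    and A2: "A2 \<in> exec chan msg tr" "B2 = restr chan A2 IN" and "p A1 = p A2"
    unfolding Rp_def by blast
  from assms(3) obtain A2' A3 where A2': "A2' \<in> exec chan msg tr" "B2 = restr chan A2' IN"
    and A3: "A3 \<in> exec chan msg tr" "B3 = restr chan A3 IN" and "p A2' = p A3"
    unfolding Rp_def by blast
  have "p A2 = p A2'"
    using det A2 A2' unfolding determined_by_inputs_def by metis
  with \<open>p A1 = p A2\<close> \<open>p A2' = p A3\<close> have "p A1 = p A3" by simp
  with A1 A3 show ?thesis unfolding Rp_def by blast
qed

lemma fp_subset_lruns: "fp chan msg tr p S \<subseteq> lruns chan msg tr IN"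
  unfolding fp_def by blast

lemma fp_extensive:
  "S \<subseteq> lruns chan msg tr IN \<Longrightarrow> S \<subseteq> fp chan msg tr p S"
  unfolding fp_def using Rp_refl by blast

lemma fp_idem:
  assumes "determined_by_inputs chan msg tr p"
  shows "fp chan msg tr p (fp chan msg tr p S) = fp chan msg tr p S"
proof
  show "fp chan msg tr p (fp chan msg tr p S) \<subseteq> fp chan msg tr p S"
    unfolding fp_def using Rp_trans[OF assms] by blast
  show "fp chan msg tr p S \<subseteq> fp chan msg tr p (fp chan msg tr p S)"
    by (rule fp_extensive[OF fp_subset_lruns])
qed

lemma fp_Union: "fp chan msg tr p (\<Union>SS) = (\<Union>S\<in>SS. fp chan msg tr p S)"
  unfolding fp_def by blast

lemma blur_on_fp:
  "determined_by_inputs chan msg tr p \<Longrightarrow> blur_on (lruns chan msg tr IN) (fp chan msg tr p)"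
  unfolding blur_on_def by (simp add: fp_extensive fp_subset_lruns fp_idem fp_Union)

lemma Jrel_subset_lruns: "Jrel chan msg tr C C' B \<subseteq> lruns chan msg tr C'"
  unfolding Jrel_def lruns_def by blast

lemma ND_iff_Jrel_fp_closed:
  assumes det: "determined_by_inputs chan msg tr p"
  shows "ND chan msg tr i p \<longleftrightarrow>
    (\<forall>B\<in>lruns chan msg tr (Ci i).
       fp chan msg tr p (Jrel chan msg tr (Ci i) IN B) \<subseteq> Jrel chan msg tr (Ci i) IN B)"
    (is "_ \<longleftrightarrow> (\<forall>B\<in>_. ?closed B)")
proof
  assume nd: "ND chan msg tr i p"
  show "\<forall>B\<in>lruns chan msg tr (Ci i). ?closed B"
  proof (intro ballI subsetI)
    fix B x assume "x \<in> fp chan msg tr p (Jrel chan msg tr (Ci i) IN B)"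
    then obtain B1 where "B1 \<in> Jrel chan msg tr (Ci i) IN B" "Rp chan msg tr p B1 x"
      unfolding fp_def by blast
    then obtain A1 A1' A2 where A1: "A1 \<in> exec chan msg tr" "restr chan A1 (Ci i) = B"
      and A1': "A1' \<in> exec chan msg tr" "restr chan A1 IN = restr chan A1' IN"
      and A2: "A2 \<in> exec chan msg tr" "x = restr chan A2 IN" and "p A1' = p A2"
      unfolding Jrel_def Rp_def by blast
    have "p A1 = p A1'"
      using det A1 A1' unfolding determined_by_inputs_def by blast
    with \<open>p A1' = p A2\<close> nd A1 A2 show "x \<in> Jrel chan msg tr (Ci i) IN B"
      unfolding ND_def by metis
  qed
next
  assume closed: "\<forall>B\<in>lruns chan msg tr (Ci i). ?closed B"
  show "ND chan msg tr i p" unfolding ND_def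
  proof (intro ballI impI)
    fix A A' assume A: "A \<in> exec chan msg tr" and A': "A' \<in> exec chan msg tr"
      and "p A = p A'"
    let ?B = "restr chan A (Ci i)"
    have "restr chan A IN \<in> Jrel chan msg tr (Ci i) IN ?B"
      using A unfolding Jrel_def by blast
    moreover have "Rp chan msg tr p (restr chan A IN) (restr chan A' IN)"
      using A A' \<open>p A = p A'\<close> unfolding Rp_def by blast
    moreover have "restr chan A' IN \<in> lruns chan msg tr IN"
      using A' unfolding lruns_def by blast
    ultimately have "restr chan A' IN \<in> fp chan msg tr p (Jrel chan msg tr (Ci i) IN ?B)"
      unfolding fp_def by blast
    moreover have "?B \<in> lruns chan msg tr (Ci i)"
      using A unfolding lruns_def by blast
    ultimately show "restr chan A' IN \<in> Jrel chan msg tr (Ci i) IN ?B"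
      using closed by blast
  qed
qed

theorem lemma10:
  fixes chan :: "'e \<Rightarrow> ('dom::finite) chan"
    and msg :: "'e \<Rightarrow> 'd"
    and tr :: "'dom loc \<Rightarrow> ('dom chan, 'd) trace set"
    and flows :: "'dom \<Rightarrow> 'dom \<Rightarrow> bool"
    and i :: 'dom
    and p :: "'e sys \<Rightarrow> 'r"
  assumes "frame_wf tr"
    and "\<forall>d. flows d d"
    and "purge_fun chan msg tr flows i p"
  shows "ND chan msg tr i p \<longleftrightarrow> f_limits chan msg tr (fp chan msg tr p) IN (Ci i)"
proof -
  have det: "determined_by_inputs chan msg tr p"
    using assms(3) by (rule purge_fun_imp_determined_by_inputs)
  have "fp chan msg tr p (Jrel chan msg tr (Ci i) IN B) = Jrel chan msg tr (Ci i) IN B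
      \<longleftrightarrow> fp chan msg tr p (Jrel chan msg tr (Ci i) IN B) \<subseteq> Jrel chan msg tr (Ci i) IN B" for B
    using fp_extensive[OF Jrel_subset_lruns] by blast
  then show ?thesis
    unfolding f_limits_def ND_iff_Jrel_fp_closed[OF det] using blur_on_fp[OF det] by simp
qed

end
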